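(* Let $m\ge1$, $j\in\{0,\ldots,m-1\}$ and let $M_j$ be as in the context (PNS or PNGS version). For every $z'\in M_j$ there is $\epsilon>0$ such that for all $z\in M_j$ with $\|z-z'\|<\epsilon$: $z$ and $z'$ are in optimal position (i.e. $\|z'-z\|=\min_{R\in O(m-j)}\|z'-zR\|$) if and only if $z^Tz'-z'^Tz=0$.
   Context: $\|\cdot\|$ is the Frobenius norm; $O(k,n)=\{v\in\mathbb R^{n\times k}:v^Tv=I_k\}$; $O(k)$ is the orthogonal group; $\mathbb D^k$ and $\mathbb S^{k-1}$ are the open unit ball and unit sphere of $\mathbb R^k$. For $j\in\{1,\ldots,m-1\}$, PNS version: $M_j=\{\binom{v}{\alpha^T}: v\in O(m-j,m+1),\alpha\in\mathbb D^{m-j}\}\subset\mathbb R^{(m+2)\times(m-j)}$; PNGS version: the same with $\alpha=0$. For $j=0$: $M_0=\{\binom{v}{\alpha^T}: v\in O(m,m+1),\alpha\in\mathbb S^{m-1}\}$. $O(m-j)$ acts on $M_j$ from the right by $z\mapsto zR$. *)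

theory Defs
  imports Complex_Main "Jordan_Normal_Form.Matrix"
begin

definition frob_norm :: "real mat \<Rightarrow> real" where
  "frob_norm A = sqrt (\<Sum>i<dim_row A. \<Sum>j<dim_col A. (A $$ (i,j))^2)"

definition vnorm :: "real vec \<Rightarrow> real" where
  "vnorm a = sqrt (scalar_prod a a)"

definition stiefel :: "nat \<Rightarrow> nat \<Rightarrow> real mat set" where
  "stiefel k n = {v \<in> carrier_mat n k. transpose_mat v * v = 1\<^sub>m k}"

definition orth_group :: "nat \<Rightarrow> real mat set" where
  "orth_group k = stiefel k k"

definition stack :: "real mat \<Rightarrow> real vec \<Rightarrow> real mat" where
  "stack v a = mat (dim_row v + 1) (dim_col v)
      (\<lambda>(i,l). if i < dim_row v then v $$ (i,l) else a $ l)"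

text \<open>M_j. The flag pngs selects the PNGS version (alpha = 0 for j >= 1);
  otherwise the PNS version. For j = 0 both versions use alpha in the unit sphere.\<close>
definition Mset :: "bool \<Rightarrow> nat \<Rightarrow> nat \<Rightarrow> real mat set" where
  "Mset pngs m j =
     (if j = 0 then
        {stack v a | v a. v \<in> stiefel m (m+1) \<and> a \<in> carrier_vec m \<and> vnorm a = 1}
      else if pngs then
        {stack v (0\<^sub>v (m-j)) | v. v \<in> stiefel (m-j) (m+1)}
      else
        {stack v a | v a. v \<in> stiefel (m-j) (m+1) \<and> a \<in> carrier_vec (m-j) \<and> vnorm a < 1})"

text \<open>z and z' are in optimal position: ||z' - z|| = min over R in O(k) of ||z' - z R||,
  k the number of columns (the minimum exists by compactness of O(k); it is
  expressed here as the infimum).\<close>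
definition optimal_position :: "real mat \<Rightarrow> real mat \<Rightarrow> bool" where
  "optimal_position z z' \<longleftrightarrow>
     frob_norm (z' - z) = (INF R \<in> orth_group (dim_col z). frob_norm (z' - z * R))"

end

theory Submission
  imports Defs "Jordan_Normal_Form.Determinant" "HOL-Analysis.Convex"
begin

text \<open>Write \<open>A = z'\<^sup>T z\<close>. For orthogonal \<open>R\<close>,
  \<open>\<parallel>z' - z R\<parallel>\<^sup>2 = \<parallel>z'\<parallel>\<^sup>2 + \<parallel>z\<parallel>\<^sup>2 - 2 tr (A R)\<close>,
  so \<open>z\<close> and \<open>z'\<close> are in optimal position iff \<open>R = 1\<close> maximises \<open>tr (A R)\<close>
  over \<open>O(k)\<close>, and the commutator condition says that \<open>A\<close> is symmetric.
  If \<open>A\<close> is not symmetric, a Givens rotation in the plane of an asymmetric pair of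
  indices increases the trace to first order. If \<open>A\<close> is symmetric, then
  \<open>2 (tr A - tr (A R)) = \<Sum>\<^sub>r x\<^sub>r\<^sup>T A x\<^sub>r\<close> with \<open>x\<^sub>r = e\<^sub>r - R\<^sup>T e\<^sub>r\<close>,
  which is nonnegative as soon as \<open>A\<close> is positive semidefinite. This holds whenever
  \<open>\<parallel>z - z'\<parallel> < 1\<close>: the upper block of \<open>z'\<close> has orthonormal columns, so
  \<open>\<parallel>(z - z') x\<parallel> \<le> \<parallel>x\<parallel> \<le> \<parallel>z' x\<parallel>\<close>, which forces
  \<open>x\<^sup>T A x = \<langle>z' x, z x\<rangle> \<ge> 0\<close>. Hence \<open>\<epsilon> = 1\<close> works.\<close>

definition mat_trace :: "real mat \<Rightarrow> real" where
  "mat_trace A = (\<Sum>i<dim_row A. A $$ (i,i))"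

lemma mat_trace_mult:
  assumes "A \<in> carrier_mat n k" "B \<in> carrier_mat k n"
  shows "mat_trace (A * B) = (\<Sum>i<n. \<Sum>p<k. A $$ (i,p) * B $$ (p,i))"
  using assms by (simp add: mat_trace_def scalar_prod_def atLeast0LessThan)

lemma stiefel_cols_orthonormal:
  assumes "v \<in> stiefel k N" "p < k" "q < k"
  shows "(\<Sum>i<N. v $$ (i,p) * v $$ (i,q)) = (if p = q then 1 else 0)"
proof -
  have v: "v \<in> carrier_mat N k" "transpose_mat v * v = 1\<^sub>m k"
    using assms(1) by (auto simp: stiefel_def)
  have "(\<Sum>i<N. v $$ (i,p) * v $$ (i,q)) = (transpose_mat v * v) $$ (p,q)"
    using v(1) assms by (simp add: scalar_prod_def atLeast0LessThan)
  also have "\<dots> = (if p = q then 1 else 0)"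
    using v(2) assms by simp
  finally show ?thesis .
qed

lemma one_mat_orth_group: "1\<^sub>m k \<in> orth_group k"
  by (auto simp: orth_group_def stiefel_def)

lemma orth_group_carrier: "R \<in> orth_group k \<Longrightarrow> R \<in> carrier_mat k k"
  by (simp add: orth_group_def stiefel_def)

lemma transpose_orth_group:
  assumes "R \<in> orth_group k"
  shows "transpose_mat R \<in> orth_group k"
proof -
  have R: "R \<in> carrier_mat k k" "transpose_mat R * R = 1\<^sub>m k"
    using assms by (auto simp: orth_group_def stiefel_def)
  then have "R * transpose_mat R = 1\<^sub>m k"
    using mat_mult_left_right_inverse[of "transpose_mat R" k R] by simp
  then show ?thesis
    using R by (simp add: orth_group_def stiefel_def)
qed

lemma orth_group_rows_orthonormal:
  assumes "R \<in> orth_group k" "p < k" "q < k"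
  shows "(\<Sum>l<k. R $$ (p,l) * R $$ (q,l)) = (if p = q then 1 else 0)"
  using stiefel_cols_orthonormal[OF transpose_orth_group[OF assms(1), unfolded orth_group_def]]
    orth_group_carrier[OF assms(1)] assms(2,3)
  by simp

lemma sum_squares_orthonormal_cols:
  fixes V :: "nat \<Rightarrow> nat \<Rightarrow> real"
  assumes "\<And>p q. p < k \<Longrightarrow> q < k \<Longrightarrow> (\<Sum>i<N. V i p * V i q) = (if p = q then 1 else 0)"
  shows "(\<Sum>i<N. (\<Sum>p<k. V i p * x p)\<^sup>2) = (\<Sum>p<k. (x p)\<^sup>2)"
proof -
  have "(\<Sum>i<N. (\<Sum>p<k. V i p * x p)\<^sup>2) = (\<Sum>i<N. \<Sum>p<k. \<Sum>q<k. x p * x q * (V i p * V i q))"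
    by (simp add: power2_eq_square sum_product algebra_simps)
  also have "\<dots> = (\<Sum>p<k. \<Sum>q<k. x p * x q * (\<Sum>i<N. V i p * V i q))"
    by (simp add: sum_distrib_left sum.swap[of _ "{..<N}"])
  also have "\<dots> = (\<Sum>p<k. (x p)\<^sup>2)"
    by (simp add: assms power2_eq_square if_distrib cong: if_cong)
  finally show ?thesis .
qed

lemma frob_norm_nonneg: "0 \<le> frob_norm A"
  by (simp add: frob_norm_def sum_nonneg)

lemma frob_norm_sq: "(frob_norm A)\<^sup>2 = (\<Sum>i<dim_row A. \<Sum>j<dim_col A. (A $$ (i,j))\<^sup>2)"
  by (simp add: frob_norm_def sum_nonneg)

lemma mat_trace_transpose_mult:
  assumes "X \<in> carrier_mat n k" "Y \<in> carrier_mat n k"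
  shows "mat_trace (transpose_mat X * Y) = (\<Sum>i<n. \<Sum>j<k. X $$ (i,j) * Y $$ (i,j))"
  using assms by (simp add: mat_trace_mult[of _ k n]) (rule sum.swap)

lemma frob_norm_diff_sq:
  assumes "X \<in> carrier_mat n k" "Y \<in> carrier_mat n k"
  shows "(frob_norm (X - Y))\<^sup>2 = (frob_norm X)\<^sup>2 + (frob_norm Y)\<^sup>2 - 2 * mat_trace (transpose_mat X * Y)"
  using assms
  by (simp add: frob_norm_sq mat_trace_transpose_mult power2_diff sum_subtractf sum.distrib sum_distrib_left mult.assoc)

lemma frob_norm_mult_orth_group:
  assumes z: "z \<in> carrier_mat n k" and R: "R \<in> orth_group k"
  shows "frob_norm (z * R) = frob_norm z"
proof -
  have "(\<Sum>l<k. ((z * R) $$ (i,l))\<^sup>2) = (\<Sum>p<k. (z $$ (i,p))\<^sup>2)" if "i < n" for i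
    using sum_squares_orthonormal_cols[where V="\<lambda>l p. R $$ (p,l)" and x="\<lambda>p. z $$ (i,p)" and k=k and N=k]
      orth_group_rows_orthonormal[OF R] z orth_group_carrier[OF R] that
    by (simp add: scalar_prod_def atLeast0LessThan mult.commute)
  then have "(frob_norm (z * R))\<^sup>2 = (frob_norm z)\<^sup>2"
    using z orth_group_carrier[OF R] by (simp add: frob_norm_sq)
  then show ?thesis
    by (simp add: power2_eq_iff_nonneg frob_norm_nonneg)
qed

lemma INF_eq_iff_le_all:
  fixes f :: "'a \<Rightarrow> 'b::conditionally_complete_linorder"
  assumes "x \<in> S" "bdd_below (f ` S)"
  shows "f x = (INF y\<in>S. f y) \<longleftrightarrow> (\<forall>y\<in>S. f x \<le> f y)"
proof
  assume "\<forall>y\<in>S. f x \<le> f y"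
  then have "(INF y\<in>S. f y) = f x"
    using assms(1) by (intro cInf_eq_minimum) auto
  then show "f x = (INF y\<in>S. f y)" ..
qed (use cINF_lower[OF assms(2)] in auto)

lemma optimal_position_iff_mat_trace_mult_orth_le:
  assumes z: "z \<in> carrier_mat n k" and z': "z' \<in> carrier_mat n k"
  shows "optimal_position z z' \<longleftrightarrow>
    (\<forall>R\<in>orth_group k. mat_trace (transpose_mat z' * z * R) \<le> mat_trace (transpose_mat z' * z))"
proof -
  define d where "d R = frob_norm (z' - z * R)" for R
  have d_sq: "(d R)\<^sup>2 = (frob_norm z')\<^sup>2 + (frob_norm z)\<^sup>2 - 2 * mat_trace (transpose_mat z' * z * R)"
    if "R \<in> orth_group k" for R
  proof -
    have R: "R \<in> carrier_mat k k"
      using orth_group_carrier[OF that] .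
    then have "transpose_mat z' * (z * R) = transpose_mat z' * z * R"
      using z z' by (simp add: assoc_mult_mat[of _ k n _ k])
    then show ?thesis
      unfolding d_def using frob_norm_diff_sq[OF z', of "z * R"] frob_norm_mult_orth_group[OF z that] z R
      by simp
  qed
  have "optimal_position z z' \<longleftrightarrow> d (1\<^sub>m k) = (INF R\<in>orth_group k. d R)"
    using z by (simp add: optimal_position_def d_def)
  also have "\<dots> \<longleftrightarrow> (\<forall>R\<in>orth_group k. d (1\<^sub>m k) \<le> d R)"
    by (rule INF_eq_iff_le_all[OF one_mat_orth_group])
      (auto simp: d_def frob_norm_nonneg intro: bdd_belowI[of _ 0])
  also have "\<dots> \<longleftrightarrow> (\<forall>R\<in>orth_group k. (d (1\<^sub>m k))\<^sup>2 \<le> (d R)\<^sup>2)"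
    by (simp add: abs_le_square_iff[symmetric] d_def frob_norm_nonneg)
  also have "\<dots> \<longleftrightarrow>
      (\<forall>R\<in>orth_group k. mat_trace (transpose_mat z' * z * R) \<le> mat_trace (transpose_mat z' * z))"
    using d_sq one_mat_orth_group z by simp
  finally show ?thesis .
qed

definition givens :: "nat \<Rightarrow> nat \<Rightarrow> nat \<Rightarrow> real \<Rightarrow> real \<Rightarrow> real mat" where
  "givens k a b c s = mat k k (\<lambda>(p,l).
     if p = l then (if p = a \<or> p = b then c else 1)
     else if p = b \<and> l = a then s else if p = a \<and> l = b then -s else 0)"

lemma sum_mult_givens:
  assumes "a \<noteq> b" "a < k" "b < k" "l < k"
  shows "(\<Sum>p<k. f p * givens k a b c s $$ (p,l)) =
    (if l = a then c * f a + s * f b else if l = b then c * f b - s * f a else f l)"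
proof -
  have "(\<Sum>p<k. f p * givens k a b c s $$ (p,l)) =
      (\<Sum>p<k. (if p = l then f l * (if l = a \<or> l = b then c else 1) else 0)
        + (if p = b then f b * (if l = a then s else 0) else 0)
        + (if p = a then f a * (if l = b then -s else 0) else 0))"
    using assms by (intro sum.cong refl) (auto simp: givens_def)
  also have "\<dots> = (if l = a then c * f a + s * f b else if l = b then c * f b - s * f a else f l)"
    using assms by (auto simp: sum.distrib)
  finally show ?thesis .
qed

lemma givens_orth_group:
  assumes "a \<noteq> b" "a < k" "b < k" "c\<^sup>2 + s\<^sup>2 = 1"
  shows "givens k a b c s \<in> orth_group k"
proof -
  let ?G = "givens k a b c s"
  have G: "?G \<in> carrier_mat k k"
    by (simp add: givens_def)
  have "(transpose_mat ?G * ?G) $$ (p,q) = 1\<^sub>m k $$ (p,q)" if "p < k" "q < k" for p q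
  proof -
    have "(transpose_mat ?G * ?G) $$ (p,q) = (\<Sum>r<k. ?G $$ (r,p) * ?G $$ (r,q))"
      using G that by (simp add: scalar_prod_def atLeast0LessThan)
    also have "\<dots> = 1\<^sub>m k $$ (p,q)"
      using assms that by (simp add: sum_mult_givens) (auto simp: givens_def power2_eq_square algebra_simps)
    finally show ?thesis .
  qed
  then have "transpose_mat ?G * ?G = 1\<^sub>m k"
    using G by (intro eq_matI) auto
  then show ?thesis
    using G by (simp add: orth_group_def stiefel_def)
qed

lemma mat_trace_mult_givens:
  assumes A: "A \<in> carrier_mat k k" and "a \<noteq> b" "a < k" "b < k"
  shows "mat_trace (A * givens k a b c s) =
    mat_trace A + (c - 1) * (A $$ (a,a) + A $$ (b,b)) + s * (A $$ (a,b) - A $$ (b,a))"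
proof -
  have "mat_trace (A * givens k a b c s) = (\<Sum>l<k. \<Sum>p<k. A $$ (l,p) * givens k a b c s $$ (p,l))"
    using A by (simp add: mat_trace_mult[of _ k k] givens_def)
  also have "\<dots> = (\<Sum>l<k. A $$ (l,l) + (if l = a then (c - 1) * A $$ (a,a) + s * A $$ (a,b) else 0)
      + (if l = b then (c - 1) * A $$ (b,b) - s * A $$ (b,a) else 0))"
    using assms by (intro sum.cong refl) (auto simp: sum_mult_givens algebra_simps)
  also have "\<dots> = mat_trace A + (c - 1) * (A $$ (a,a) + A $$ (b,b)) + s * (A $$ (a,b) - A $$ (b,a))"
    using assms by (simp add: sum.distrib mat_trace_def algebra_simps)
  finally show ?thesis .
qed

text \<open>A rotation by a small angle of the right sign: the rational parametrisation
  \<open>c = (1 - t\<^sup>2) / (1 + t\<^sup>2)\<close>, \<open>s = 2 t / (1 + t\<^sup>2)\<close> with \<open>t = d / (\<bar>T\<bar> + 1)\<close>.\<close>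
lemma exists_rotation_gain:
  fixes T d :: real
  assumes "d \<noteq> 0"
  shows "\<exists>c s. c\<^sup>2 + s\<^sup>2 = 1 \<and> 0 < (c - 1) * T + s * d"
proof -
  define t where "t = d / (\<bar>T\<bar> + 1)"
  define c where "c = (1 - t\<^sup>2) / (1 + t\<^sup>2)"
  define s where "s = 2 * t / (1 + t\<^sup>2)"
  have pos: "0 < 1 + t\<^sup>2"
    by (simp add: add_pos_nonneg)
  have "c\<^sup>2 + s\<^sup>2 = 1"
    using pos unfolding c_def s_def by (simp add: divide_simps) (simp add: power2_eq_square algebra_simps)
  moreover have "(c - 1) * T + s * d = 2 * t\<^sup>2 * (\<bar>T\<bar> + 1 - T) / (1 + t\<^sup>2)"
  proof -
    have "d = t * (\<bar>T\<bar> + 1)"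
      unfolding t_def by (simp add: add_pos_nonneg)
    then show ?thesis
      using pos unfolding c_def s_def by (simp add: divide_simps) (simp add: power2_eq_square algebra_simps)
  qed
  moreover have "0 < 2 * t\<^sup>2 * (\<bar>T\<bar> + 1 - T) / (1 + t\<^sup>2)"
    using assms pos by (intro divide_pos_pos mult_pos_pos) (auto simp: t_def add_pos_nonneg)
  ultimately show ?thesis
    by metis
qed

lemma symmetric_if_mat_trace_mult_orth_le:
  assumes A: "A \<in> carrier_mat k k"
    and max: "\<forall>R\<in>orth_group k. mat_trace (A * R) \<le> mat_trace A"
  shows "transpose_mat A = A"
proof (rule eq_matI)
  fix p q assume "p < dim_row A" "q < dim_col A"
  then have pq: "p < k" "q < k"
    using A by auto
  show "transpose_mat A $$ (p,q) = A $$ (p,q)"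
  proof (rule ccontr)
    assume "transpose_mat A $$ (p,q) \<noteq> A $$ (p,q)"
    then have ne: "A $$ (p,q) - A $$ (q,p) \<noteq> 0" "p \<noteq> q"
      using A pq by auto
    obtain c s where cs: "c\<^sup>2 + s\<^sup>2 = 1"
      and gain: "0 < (c - 1) * (A $$ (p,p) + A $$ (q,q)) + s * (A $$ (p,q) - A $$ (q,p))"
      using exists_rotation_gain[OF ne(1)] by blast
    have "mat_trace A < mat_trace (A * givens k p q c s)"
      using gain mat_trace_mult_givens[OF A ne(2) pq] by simp
    with max givens_orth_group[OF ne(2) pq cs] show False
      by fastforce
  qed
qed (use A in auto)

lemma sum_quad_form_id_minus_rows:
  fixes A R :: "real mat"
  assumes A: "A \<in> carrier_mat k k" and sym: "transpose_mat A = A" and R: "R \<in> orth_group k"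
  defines "x r p \<equiv> (if r = p then 1 else 0) - R $$ (r,p)"
  shows "(\<Sum>r<k. \<Sum>p<k. \<Sum>q<k. A $$ (p,q) * x r p * x r q) = 2 * (mat_trace A - mat_trace (A * R))"
proof -
  have A_sym: "A $$ (q,p) = A $$ (p,q)" if "p < k" "q < k" for p q
    using arg_cong[OF sym, of "\<lambda>M. M $$ (p,q)"] A that by simp
  have x_gram: "(\<Sum>r<k. x r p * x r q) = (if p = q then 2 else 0) - R $$ (p,q) - R $$ (q,p)"
    if "p < k" "q < k" for p q
  proof -
    have "(\<Sum>r<k. x r p * x r q) = (\<Sum>r<k. (if r = p then if r = q then 1 else 0 else 0)
        - (if r = p then R $$ (r,q) else 0) - (if r = q then R $$ (r,p) else 0) + R $$ (r,p) * R $$ (r,q))"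
      unfolding x_def by (intro sum.cong refl) (auto simp: algebra_simps)
    then show ?thesis
      using that stiefel_cols_orthonormal[of R k k p q] R
      by (simp add: sum.distrib sum_subtractf orth_group_def)
  qed
  have "(\<Sum>r<k. \<Sum>p<k. \<Sum>q<k. A $$ (p,q) * x r p * x r q)
      = (\<Sum>p<k. \<Sum>r<k. \<Sum>q<k. A $$ (p,q) * x r p * x r q)"
    by (rule sum.swap)
  also have "\<dots> = (\<Sum>p<k. \<Sum>q<k. A $$ (p,q) * (\<Sum>r<k. x r p * x r q))"
    by (rule sum.cong[OF refl]) (subst sum.swap, simp add: sum_distrib_left mult.assoc)
  also have "\<dots> = (\<Sum>p<k. \<Sum>q<k. (if p = q then 2 * A $$ (p,q) else 0)
      - A $$ (p,q) * R $$ (p,q) - A $$ (p,q) * R $$ (q,p))"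
    by (intro sum.cong refl) (simp add: x_gram algebra_simps)
  also have "\<dots> = 2 * (\<Sum>p<k. A $$ (p,p)) - (\<Sum>p<k. \<Sum>q<k. A $$ (p,q) * R $$ (p,q))
      - (\<Sum>p<k. \<Sum>q<k. A $$ (p,q) * R $$ (q,p))"
    by (simp add: sum_subtractf sum_distrib_left)
  also have "(\<Sum>p<k. \<Sum>q<k. A $$ (p,q) * R $$ (p,q)) = (\<Sum>p<k. \<Sum>q<k. A $$ (p,q) * R $$ (q,p))"
    by (subst sum.swap) (simp add: A_sym)
  also have "(\<Sum>p<k. \<Sum>q<k. A $$ (p,q) * R $$ (q,p)) = mat_trace (A * R)"
    using A orth_group_carrier[OF R] by (simp add: mat_trace_mult[of _ k k])
  also have "(\<Sum>p<k. A $$ (p,p)) = mat_trace A"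
    using A by (simp add: mat_trace_def)
  finally show ?thesis
    by simp
qed

lemma mat_trace_mult_orth_le_if_symmetric_psd:
  fixes A R :: "real mat"
  assumes A: "A \<in> carrier_mat k k" and sym: "transpose_mat A = A"
    and psd: "\<And>x. 0 \<le> (\<Sum>p<k. \<Sum>q<k. A $$ (p,q) * x p * x q)"
    and R: "R \<in> orth_group k"
  shows "mat_trace (A * R) \<le> mat_trace A"
proof -
  let ?x = "\<lambda>r p. (if r = p then 1 else 0) - R $$ (r,p)"
  have "0 \<le> (\<Sum>r<k. \<Sum>p<k. \<Sum>q<k. A $$ (p,q) * ?x r p * ?x r q)"
    by (intro sum_nonneg psd)
  then show ?thesis
    using sum_quad_form_id_minus_rows[OF A sym R] by simp
qed

lemma sum_mult_nonneg_if_sum_sq_diff_le: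
  fixes a b :: "'i \<Rightarrow> real"
  assumes "(\<Sum>i\<in>I. (b i - a i)\<^sup>2) \<le> (\<Sum>i\<in>I. (a i)\<^sup>2)"
  shows "0 \<le> (\<Sum>i\<in>I. a i * b i)"
proof -
  have "(\<Sum>i\<in>I. (b i - a i)\<^sup>2) = (\<Sum>i\<in>I. (b i)\<^sup>2) - 2 * (\<Sum>i\<in>I. a i * b i) + (\<Sum>i\<in>I. (a i)\<^sup>2)"
    by (simp add: power2_diff sum.distrib sum_subtractf sum_distrib_left algebra_simps)
  with assms sum_nonneg[of I "\<lambda>i. (b i)\<^sup>2"] show ?thesis
    by simp
qed

lemma sum_sq_mult_le_frob_norm:
  assumes "M \<in> carrier_mat n k"
  shows "(\<Sum>i<n. (\<Sum>p<k. M $$ (i,p) * x p)\<^sup>2) \<le> (frob_norm M)\<^sup>2 * (\<Sum>p<k. (x p)\<^sup>2)"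
proof -
  have "(\<Sum>i<n. (\<Sum>p<k. M $$ (i,p) * x p)\<^sup>2) \<le> (\<Sum>i<n. (\<Sum>p<k. (M $$ (i,p))\<^sup>2) * (\<Sum>p<k. (x p)\<^sup>2))"
    by (intro sum_mono Cauchy_Schwarz_ineq_sum)
  also have "\<dots> = (frob_norm M)\<^sup>2 * (\<Sum>p<k. (x p)\<^sup>2)"
    using assms by (simp add: frob_norm_sq sum_distrib_right)
  finally show ?thesis .
qed

lemma quad_form_transpose_mult:
  fixes z z' :: "real mat"
  assumes z: "z \<in> carrier_mat n k" and z': "z' \<in> carrier_mat n k"
  shows "(\<Sum>p<k. \<Sum>q<k. (transpose_mat z' * z) $$ (p,q) * x p * x q)
    = (\<Sum>i<n. (\<Sum>p<k. z' $$ (i,p) * x p) * (\<Sum>q<k. z $$ (i,q) * x q))"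
proof -
  have "(\<Sum>p<k. \<Sum>q<k. (transpose_mat z' * z) $$ (p,q) * x p * x q)
      = (\<Sum>p<k. \<Sum>q<k. \<Sum>i<n. z' $$ (i,p) * x p * (z $$ (i,q) * x q))"
    using z z' by (intro sum.cong refl)
      (simp add: scalar_prod_def atLeast0LessThan sum_distrib_left sum_distrib_right mult_ac)
  also have "\<dots> = (\<Sum>i<n. \<Sum>p<k. \<Sum>q<k. z' $$ (i,p) * x p * (z $$ (i,q) * x q))"
    by (subst (2) sum.swap, subst sum.swap, simp)
  also have "\<dots> = (\<Sum>i<n. (\<Sum>p<k. z' $$ (i,p) * x p) * (\<Sum>q<k. z $$ (i,q) * x q))"
    by (simp add: sum_product)
  finally show ?thesis .
qed

lemma quad_form_transpose_mult_nonneg_if_close: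
  fixes z z' :: "real mat"
  assumes z: "z \<in> carrier_mat n k" and z': "z' \<in> carrier_mat n k"
    and close: "frob_norm (z - z') \<le> 1"
    and expanding: "(\<Sum>p<k. (x p)\<^sup>2) \<le> (\<Sum>i<n. (\<Sum>p<k. z' $$ (i,p) * x p)\<^sup>2)"
  shows "0 \<le> (\<Sum>p<k. \<Sum>q<k. (transpose_mat z' * z) $$ (p,q) * x p * x q)"
proof -
  define a where "a i = (\<Sum>p<k. z' $$ (i,p) * x p)" for i
  define b where "b i = (\<Sum>p<k. z $$ (i,p) * x p)" for i
  have "b i - a i = (\<Sum>p<k. (z - z') $$ (i,p) * x p)" if "i < n" for i
    using z z' that by (simp add: a_def b_def sum_subtractf left_diff_distrib)
  then have "(\<Sum>i<n. (b i - a i)\<^sup>2) = (\<Sum>i<n. (\<Sum>p<k. (z - z') $$ (i,p) * x p)\<^sup>2)"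
    by simp
  also have "\<dots> \<le> (frob_norm (z - z'))\<^sup>2 * (\<Sum>p<k. (x p)\<^sup>2)"
    using z z' by (intro sum_sq_mult_le_frob_norm) auto
  also have "\<dots> \<le> (\<Sum>p<k. (x p)\<^sup>2)"
    using close frob_norm_nonneg[of "z - z'"]
    by (intro mult_left_le_one_le sum_nonneg) (auto simp: power_le_one)
  also have "\<dots> \<le> (\<Sum>i<n. (a i)\<^sup>2)"
    using expanding by (simp add: a_def)
  finally have "0 \<le> (\<Sum>i<n. a i * b i)"
    by (rule sum_mult_nonneg_if_sum_sq_diff_le)
  then show ?thesis
    using quad_form_transpose_mult[OF z z'] by (simp add: a_def b_def)
qed

lemma commutator_eq_0_iff_symmetric:
  fixes z z' :: "real mat"
  assumes z: "z \<in> carrier_mat n k" and z': "z' \<in> carrier_mat n k"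
  shows "transpose_mat z * z' - transpose_mat z' * z = 0\<^sub>m k k \<longleftrightarrow>
    transpose_mat (transpose_mat z' * z) = transpose_mat z' * z"
proof -
  have "transpose_mat (transpose_mat z' * z) = transpose_mat z * z'"
    using transpose_mult[of "transpose_mat z'" k n z k] z z' by simp
  moreover have X: "transpose_mat z * z' \<in> carrier_mat k k"
    and Y: "transpose_mat z' * z \<in> carrier_mat k k"
    using z z' by auto
  moreover have "transpose_mat z * z' = transpose_mat z' * z"
    if "transpose_mat z * z' - transpose_mat z' * z = 0\<^sub>m k k"
  proof (rule eq_matI)
    fix i j assume ij: "i < dim_row (transpose_mat z' * z)" "j < dim_col (transpose_mat z' * z)"
    then have "(transpose_mat z * z' - transpose_mat z' * z) $$ (i,j) = 0"
      using that ij z z' by simp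
    then show "(transpose_mat z * z') $$ (i,j) = (transpose_mat z' * z) $$ (i,j)"
      using ij X Y by simp
  qed (use z z' in auto)
  ultimately show ?thesis
    by auto
qed

lemma Mset_stack_stiefel:
  assumes "z \<in> Mset pngs m j"
  obtains v a where "z = stack v a" "v \<in> stiefel (m - j) (m + 1)"
  using assms unfolding Mset_def by (auto split: if_splits)

lemma stack_carrier:
  "v \<in> carrier_mat N k \<Longrightarrow> stack v a \<in> carrier_mat (N + 1) k"
  by (simp add: stack_def)

lemma sum_sq_le_sum_sq_stack_stiefel_mult:
  assumes v: "v \<in> stiefel k N"
  shows "(\<Sum>p<k. (x p)\<^sup>2) \<le> (\<Sum>i<N + 1. (\<Sum>p<k. stack v a $$ (i,p) * x p)\<^sup>2)"
proof -
  have vc: "v \<in> carrier_mat N k"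
    using v by (simp add: stiefel_def)
  have "(\<Sum>p<k. (x p)\<^sup>2) = (\<Sum>i<N. (\<Sum>p<k. v $$ (i,p) * x p)\<^sup>2)"
    by (rule sum_squares_orthonormal_cols[symmetric]) (rule stiefel_cols_orthonormal[OF v])
  also have "\<dots> = (\<Sum>i<N. (\<Sum>p<k. stack v a $$ (i,p) * x p)\<^sup>2)"
    using vc by (simp add: stack_def)
  also have "\<dots> \<le> (\<Sum>i<N + 1. (\<Sum>p<k. stack v a $$ (i,p) * x p)\<^sup>2)"
    by (simp add: sum_mono2)
  finally show ?thesis .
qed

theorem corollary2p7:
  fixes m j :: nat and pngs :: bool and z' :: "real mat"
  assumes "m \<ge> 1" and "j < m" and "z' \<in> Mset pngs m j"
  shows "\<exists>\<epsilon>>0. \<forall>z \<in> Mset pngs m j. frob_norm (z - z') < \<epsilon> \<longrightarrow>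
           (optimal_position z z' \<longleftrightarrow>
            transpose_mat z * z' - transpose_mat z' * z = 0\<^sub>m (m-j) (m-j))"
proof (intro exI[of _ 1] conjI ballI impI)
  let ?k = "m - j"
  obtain v' a' where z'_def: "z' = stack v' a'" and v': "v' \<in> stiefel ?k (m + 1)"
    using Mset_stack_stiefel[OF assms(3)] .
  then have z': "z' \<in> carrier_mat (m + 2) ?k"
    using stack_carrier[of v' "m + 1" ?k a'] by (simp add: stiefel_def)
  fix z assume "z \<in> Mset pngs m j" and close: "frob_norm (z - z') < 1"
  then obtain v a where "z = stack v a" "v \<in> stiefel ?k (m + 1)"
    using Mset_stack_stiefel by blast
  then have z: "z \<in> carrier_mat (m + 2) ?k"
    using stack_carrier[of v "m + 1" ?k a] by (simp add: stiefel_def)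
  let ?A = "transpose_mat z' * z"
  have A: "?A \<in> carrier_mat ?k ?k"
    using z z' by simp
  have psd: "0 \<le> (\<Sum>p<?k. \<Sum>q<?k. ?A $$ (p,q) * x p * x q)" for x
    using quad_form_transpose_mult_nonneg_if_close[OF z z'] close
      sum_sq_le_sum_sq_stack_stiefel_mult[OF v', of x a']
    by (simp add: z'_def)
  have "optimal_position z z' \<longleftrightarrow> (\<forall>R\<in>orth_group ?k. mat_trace (?A * R) \<le> mat_trace ?A)"
    by (rule optimal_position_iff_mat_trace_mult_orth_le[OF z z'])
  also have "\<dots> \<longleftrightarrow> transpose_mat ?A = ?A"
    using symmetric_if_mat_trace_mult_orth_le[OF A] mat_trace_mult_orth_le_if_symmetric_psd[OF A _ psd]
    by blast
  also have "\<dots> \<longleftrightarrow> transpose_mat z * z' - transpose_mat z' * z = 0\<^sub>m ?k ?k"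
    by (rule commutator_eq_0_iff_symmetric[OF z z', symmetric])
  finally show "optimal_position z z' \<longleftrightarrow>
      transpose_mat z * z' - transpose_mat z' * z = 0\<^sub>m ?k ?k" .
qed simp

end
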